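(* Let $E,F$ be vector lattices with $F$ Dedekind complete, and let $T,S\in\mathcal{U}_{+}(E,F)$. Then $T\wedge S=0$ in $\mathcal{U}(E,F)$ if and only if for every $e\in E$ and every $\varepsilon>0$ there exist a partition of unity $(\rho_{\alpha})$ in $\mathfrak{B}(F)$ and a family $(e_{\alpha})$ of fragments of $e$ (indexed by the same set) such that for every $\alpha$ $$\rho_{\alpha}T(e_{\alpha})\leq\varepsilon\, T(e)\quad\text{and}\quad \rho_{\alpha}S(e-e_{\alpha})\leq\varepsilon\, S(e).$$
   Context: For vector lattices $E,F$, an operator (not necessarily linear) $T:E\to F$ is orthogonally additive if $T(x+y)=T(x)+T(y)$ whenever $x\perp y$ (so $T(0)=0$); it is positive if $T(x)\geq 0$ for all $x\in E$; it is order bounded if it maps order bounded subsets of $E$ to order bounded subsets of $F$. An orthogonally additive order bounded operator is an abstract Uryson operator; $\mathcal{U}(E,F)$ denotes the vector space of all of them and $\mathcal{U}_{+}(E,F)$ the positive ones. $\mathcal{U}(E,F)$ is ordered by $S\leq T$ iff $T-S$ is positive; when $F$ is Dedekind complete, $\mathcal{U}(E,F)$ is a Dedekind complete vector lattice with $(T\wedge S)(f)=\inf\{Tg+Sh: f=g+h,\ g\perp h\}$. An element $z\in E$ is a fragment of $x\in E$, written $z\sqsubseteq x$, if $z\perp(x-z)$; $\mathcal{F}_{x}$ is the set of fragments of $x$. $\mathfrak{B}(F)$ denotes the Boolean algebra of band (order) projections on the Dedekind complete vector lattice $F$; for $\rho\in\mathfrak{B}(F)$, $\rho^{\perp}=I-\rho$.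 A partition of unity in $\mathfrak{B}(F)$ is a family of mutually disjoint band projections whose supremum is the identity. *)

theory Defs
  imports Complex_Main
begin

text \<open>Vector lattices are modelled by types of class
  ordered_real_vector + lattice; Dedekind complete vector lattices by
  ordered_real_vector + conditionally_complete_lattice (every nonempty
  bounded-above set has a supremum).\<close>

definition vabs :: "'a::{ordered_real_vector, lattice} \<Rightarrow> 'a" where
  "vabs x = sup x (- x)"

definition disj :: "'a::{ordered_real_vector, lattice} \<Rightarrow> 'a \<Rightarrow> bool" where
  "disj x y \<longleftrightarrow> inf (vabs x) (vabs y) = 0"

definition fragment :: "'a::{ordered_real_vector, lattice} \<Rightarrow> 'a \<Rightarrow> bool" where
  "fragment z x \<longleftrightarrow> disj z (x - z)"

definition orth_additive :: "('a::{ordered_real_vector, lattice} \<Rightarrow> 'b::{ordered_real_vector, lattice}) \<Rightarrow> bool" where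
  "orth_additive T \<longleftrightarrow> (\<forall>x y. disj x y \<longrightarrow> T (x + y) = T x + T y)"

definition order_bounded_op :: "('a::{ordered_real_vector, lattice} \<Rightarrow> 'b::{ordered_real_vector, lattice}) \<Rightarrow> bool" where
  "order_bounded_op T \<longleftrightarrow>
     (\<forall>a b. \<exists>c d. \<forall>x. a \<le> x \<and> x \<le> b \<longrightarrow> c \<le> T x \<and> T x \<le> d)"

definition uryson :: "('a::{ordered_real_vector, lattice} \<Rightarrow> 'b::{ordered_real_vector, lattice}) \<Rightarrow> bool" where
  "uryson T \<longleftrightarrow> orth_additive T \<and> order_bounded_op T"

definition positive_op :: "('a \<Rightarrow> 'b::{ordered_real_vector, lattice}) \<Rightarrow> bool" where
  "positive_op T \<longleftrightarrow> (\<forall>x. 0 \<le> T x)"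

definition op_le :: "('a \<Rightarrow> 'b::{ordered_real_vector, lattice}) \<Rightarrow> ('a \<Rightarrow> 'b) \<Rightarrow> bool" where
  "op_le S T \<longleftrightarrow> positive_op (\<lambda>x. T x - S x)"

definition is_inf_U :: "('a::{ordered_real_vector, lattice} \<Rightarrow> 'b::{ordered_real_vector, lattice})
     \<Rightarrow> ('a \<Rightarrow> 'b) \<Rightarrow> ('a \<Rightarrow> 'b) \<Rightarrow> bool" where
  "is_inf_U T S R \<longleftrightarrow> uryson R \<and> op_le R T \<and> op_le R S \<and>
     (\<forall>Q. uryson Q \<and> op_le Q T \<and> op_le Q S \<longrightarrow> op_le Q R)"

definition band :: "'b::{ordered_real_vector, conditionally_complete_lattice} set \<Rightarrow> bool" where
  "band B \<longleftrightarrow> 0 \<in> B \<and> (\<forall>x\<in>B. \<forall>y\<in>B. x + y \<in> B) \<and> (\<forall>c. \<forall>x\<in>B. c *\<^sub>R x \<in> B) \<and>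
     (\<forall>x\<in>B. \<forall>y. vabs y \<le> vabs x \<longrightarrow> y \<in> B) \<and>
     (\<forall>D. D \<subseteq> B \<and> D \<noteq> {} \<and> bdd_above D \<longrightarrow> Sup D \<in> B)"

definition disj_compl :: "'a::{ordered_real_vector, lattice} set \<Rightarrow> 'a set" where
  "disj_compl B = {y. \<forall>x\<in>B. disj x y}"

definition band_proj :: "('b::{ordered_real_vector, conditionally_complete_lattice} \<Rightarrow> 'b) \<Rightarrow> bool" where
  "band_proj \<rho> \<longleftrightarrow> (\<exists>B. band B \<and> (\<forall>x. \<rho> x \<in> B \<and> x - \<rho> x \<in> disj_compl B))"

definition proj_le :: "('b::{ordered_real_vector, lattice} \<Rightarrow> 'b) \<Rightarrow> ('b \<Rightarrow> 'b) \<Rightarrow> bool" where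
  "proj_le \<pi> \<rho> \<longleftrightarrow> (\<forall>x. 0 \<le> x \<longrightarrow> \<pi> x \<le> \<rho> x)"

text \<open>Partition of unity in the Boolean algebra of band projections, indexed
  by the set A: mutually disjoint band projections whose supremum (in the
  Boolean algebra of band projections) is the identity.\<close>
definition partition_of_unity ::
  "'i set \<Rightarrow> ('i \<Rightarrow> ('b::{ordered_real_vector, conditionally_complete_lattice} \<Rightarrow> 'b)) \<Rightarrow> bool" where
  "partition_of_unity A \<rho> \<longleftrightarrow>
     (\<forall>\<alpha>\<in>A. band_proj (\<rho> \<alpha>)) \<and>
     (\<forall>\<alpha>\<in>A. \<forall>\<beta>\<in>A. \<alpha> \<noteq> \<beta> \<longrightarrow> (\<forall>x. \<rho> \<alpha> (\<rho> \<beta> x) = 0)) \<and>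
     (\<forall>\<pi>. band_proj \<pi> \<and> (\<forall>\<alpha>\<in>A. proj_le (\<rho> \<alpha>) \<pi>) \<longrightarrow> \<pi> = id)"

end

theory Submission
  imports Defs "HOL-Library.Lattice_Algebras"
begin

(*
  (\<Leftarrow>) Let Q \<le> T, S be orthogonally additive. On the band of each \<rho> \<alpha>,
  Q e = Q (ea \<alpha>) + Q (e - ea \<alpha>) \<le> T (ea \<alpha>) + S (e - ea \<alpha>) is projected below \<epsilon> (T e + S e).
  A positive element annihilated by every member of a partition of unity is 0, hence
  Q e \<le> \<epsilon> (T e + S e) for all \<epsilon> > 0, and Q \<le> 0.

  (\<Rightarrow>) The operator f \<mapsto> inf {T g + S (f - g) | g fragment of f} is orthogonally additive
  (a fragment of a disjoint sum splits into fragments of the summands, by Riesz decomposition)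
  and lies below T and S; so if T \<and> S = 0, every lower bound of {T g + S (e - g)} is \<le> 0.
  By Zorn's lemma take a maximal family of mutually disjoint band projections \<sigma>, each with a
  fragment g such that \<sigma> (T g) \<le> \<epsilon> T e and \<sigma> (S (e - g)) \<le> \<epsilon> S e. Were it not a partition of
  unity, some nonzero p \<ge> 0 would be disjoint from all its members. If p \<and> T e = 0 or
  p \<and> T e \<and> S e = 0, the projection onto that principal band works with g = e or g = 0.
  Otherwise u = \<epsilon> (p \<and> T e \<and> S e) > 0 is no lower bound, so (u - T g - S (e - g))\<^sup>+ \<noteq> 0
  for some g, and the projection onto its principal band extends the family.
*)

section \<open>Arithmetic in vector lattices\<close>

text \<open>The sort of vector lattices is not a subclass of \<open>lattice_ab_group_add\<close>, so the library
  facts on lattice-ordered groups are instantiated explicitly.\<close>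

lemma lattice_ab_group_add_vector_lattice:
  "class.lattice_ab_group_add (+) (0::'a::{ordered_real_vector,lattice}) (-) uminus (\<le>) (<) inf sup"
  by unfold_locales

lemmas vl_add_sup_inf_distribs =
    lattice_ab_group_add.add_sup_inf_distribs[OF lattice_ab_group_add_vector_lattice]
  and vl_neg_sup_eq_inf = lattice_ab_group_add.neg_sup_eq_inf[OF lattice_ab_group_add_vector_lattice]
  and vl_neg_inf_eq_sup = lattice_ab_group_add.neg_inf_eq_sup[OF lattice_ab_group_add_vector_lattice]
  and vl_add_eq_inf_sup = lattice_ab_group_add.add_eq_inf_sup[OF lattice_ab_group_add_vector_lattice]
  and vl_sup_0_eq_0 = lattice_ab_group_add.sup_0_eq_0[OF lattice_ab_group_add_vector_lattice]
  and vl_zero_le_double_add_iff =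
    lattice_ab_group_add.zero_le_double_add_iff_zero_le_single_add[OF lattice_ab_group_add_vector_lattice]

lemma scaleR_sup_distrib:
  fixes a b :: "'a::{ordered_real_vector,lattice}"
  assumes "0 \<le> c"
  shows "c *\<^sub>R sup a b = sup (c *\<^sub>R a) (c *\<^sub>R b)"
proof (cases "c = 0")
  case False
  with assms have c: "0 < c" by simp
  have "sup a b \<le> sup (c *\<^sub>R a) (c *\<^sub>R b) /\<^sub>R c"
    using c by (simp add: pos_le_divideR_eq)
  then have "c *\<^sub>R sup a b \<le> sup (c *\<^sub>R a) (c *\<^sub>R b)"
    using pos_le_divideR_eq[OF c] by blast
  moreover have "sup (c *\<^sub>R a) (c *\<^sub>R b) \<le> c *\<^sub>R sup a b"
    using assms by (simp add: scaleR_left_mono)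
  ultimately show ?thesis by (rule order.antisym)
qed simp

lemma scaleR_inf_distrib:
  fixes a b :: "'a::{ordered_real_vector,lattice}"
  assumes "0 \<le> c"
  shows "c *\<^sub>R inf a b = inf (c *\<^sub>R a) (c *\<^sub>R b)"
proof -
  have "c *\<^sub>R inf a b = - (c *\<^sub>R sup (- a) (- b))"
    by (simp only: scaleR_minus_right[symmetric] vl_neg_sup_eq_inf minus_minus)
  also have "\<dots> = inf (c *\<^sub>R a) (c *\<^sub>R b)"
    by (simp only: scaleR_sup_distrib[OF assms] scaleR_minus_right vl_neg_sup_eq_inf minus_minus)
  finally show ?thesis .
qed

lemma vabs_ge: "x \<le> vabs x" "- x \<le> vabs x"
  by (auto simp: vabs_def)

lemma vabs_leI: "x \<le> c \<Longrightarrow> - x \<le> c \<Longrightarrow> vabs x \<le> c"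
  by (simp add: vabs_def)

lemma vabs_nonneg: "0 \<le> vabs x"
proof -
  have "x + - x \<le> vabs x + vabs x" by (intro add_mono vabs_ge)
  then show ?thesis by (simp add: vl_zero_le_double_add_iff)
qed

lemma vabs_minus: "vabs (- x) = vabs x"
  by (simp add: vabs_def sup_commute)

lemma vabs_of_nonneg: "0 \<le> x \<Longrightarrow> vabs x = x"
  unfolding vabs_def by (meson dual_order.trans neg_le_0_iff_le sup.absorb1)

lemma vabs_eq_0_iff: "vabs x = 0 \<longleftrightarrow> x = 0"
  unfolding vabs_def by (rule vl_sup_0_eq_0)

lemma vabs_triangle: "vabs (x + y) \<le> vabs x + vabs y"
  using add_mono[OF vabs_ge(1) vabs_ge(1), of x y] add_mono[OF vabs_ge(2) vabs_ge(2), of x y]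
  by (intro vabs_leI) simp_all

lemma vabs_diff_le_vabs_add: "vabs x - vabs y \<le> vabs (x + y)"
  using vabs_triangle[of "x + y" "- y"] by (simp add: vabs_minus algebra_simps)

lemma vabs_scaleR: "vabs (c *\<^sub>R x) = \<bar>c\<bar> *\<^sub>R vabs x"
proof (cases "0 \<le> c")
  case True
  then show ?thesis unfolding vabs_def by (simp add: scaleR_sup_distrib)
next
  case False
  then have "c *\<^sub>R x = \<bar>c\<bar> *\<^sub>R (- x)" by simp
  then show ?thesis unfolding vabs_def by (simp add: scaleR_sup_distrib sup_commute)
qed

lemma inf_add_le_add_inf:
  fixes x y z :: "'a::{ordered_real_vector,lattice}"
  assumes "0 \<le> x" "0 \<le> y" "0 \<le> z"
  shows "inf (x + y) z \<le> inf x z + inf y z"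
proof -
  define w where "w = inf (x + y) z"
  have "w - inf x z = w + sup (- x) (- z)"
    by (simp only: diff_conv_add_uminus vl_neg_inf_eq_sup)
  also have "\<dots> = sup (w - x) (w - z)"
    by (simp add: vl_add_sup_inf_distribs)
  also have "\<dots> \<le> inf y z"
  proof (rule sup_least)
    show "w - x \<le> inf y z"
      using assms(1) by (simp add: w_def diff_le_eq add.commute add_increasing le_infI1 le_infI2)
    have "w - z \<le> 0" by (simp add: w_def)
    also have "0 \<le> inf y z" using assms(2,3) by simp
    finally show "w - z \<le> inf y z" .
  qed
  finally show ?thesis by (metis w_def diff_le_eq add.commute)
qed

definition pos_part :: "'a::{ordered_real_vector,lattice} \<Rightarrow> 'a" where
  "pos_part x = sup x 0"

definition neg_part :: "'a::{ordered_real_vector,lattice} \<Rightarrow> 'a" where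
  "neg_part x = sup (- x) 0"

lemma pos_part_nonneg: "0 \<le> pos_part x" and neg_part_nonneg: "0 \<le> neg_part x"
  by (simp_all add: pos_part_def neg_part_def)

lemma le_pos_part: "x \<le> pos_part x"
  by (simp add: pos_part_def)

lemma pos_part_eq_0_iff: "pos_part x = 0 \<longleftrightarrow> x \<le> 0"
  by (simp add: pos_part_def sup.absorb2 sup.order_iff sup_commute)

lemma pos_part_of_nonneg: "0 \<le> x \<Longrightarrow> pos_part x = x"
  by (simp add: pos_part_def sup.absorb1)

lemma pos_part_mono: "x \<le> y \<Longrightarrow> pos_part x \<le> pos_part y"
  by (simp add: pos_part_def le_supI1)

lemma pos_part_minus_neg_part: "pos_part x - neg_part x = x"
proof -
  have "pos_part x - neg_part x = sup x 0 + inf x 0"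
    by (simp add: pos_part_def neg_part_def vl_neg_sup_eq_inf)
  also have "\<dots> = x" using vl_add_eq_inf_sup[of x 0] by simp
  finally show ?thesis .
qed

lemma pos_part_add_neg_part: "pos_part x + neg_part x = vabs x"
proof -
  have "pos_part x + neg_part x = sup (sup x (- x)) 0"
    unfolding pos_part_def neg_part_def vl_add_sup_inf_distribs
    by (simp add: sup_assoc sup_commute sup_left_commute)
  then show ?thesis
    using vabs_nonneg[of x] by (simp add: vabs_def sup.absorb1)
qed

lemma inf_pos_part_neg_part: "inf (pos_part x) (neg_part x) = 0"
proof -
  have "sup (pos_part x) (neg_part x) = vabs x"
    using vabs_nonneg[of x] unfolding pos_part_def neg_part_def vabs_def
    by (metis sup.absorb1 sup_assoc sup_commute sup_left_commute)
  then show ?thesis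
    using vl_add_eq_inf_sup[of "pos_part x" "neg_part x"] by (simp add: pos_part_add_neg_part)
qed

lemma pos_part_le_vabs: "pos_part x \<le> vabs x" and neg_part_le_vabs: "neg_part x \<le> vabs x"
  using vabs_nonneg[of x] vabs_ge[of x] by (simp_all add: pos_part_def neg_part_def)

section \<open>Disjointness and fragments\<close>

lemma disj_sym: "disj x y \<Longrightarrow> disj y x"
  by (simp add: disj_def inf_commute)

lemma disj_zero: "disj x 0"
  by (simp add: disj_def vabs_nonneg inf.absorb2 vabs_of_nonneg)

lemma disj_self_eq_0: "disj x x \<Longrightarrow> x = 0"
  by (simp add: disj_def vabs_eq_0_iff)

lemma disj_of_nonneg: "0 \<le> x \<Longrightarrow> 0 \<le> y \<Longrightarrow> disj x y \<longleftrightarrow> inf x y = 0"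
  by (simp add: disj_def vabs_of_nonneg)

lemma disj_if_inf_le_0: "inf (vabs x) (vabs y) \<le> 0 \<Longrightarrow> disj x y"
  unfolding disj_def using vabs_nonneg[of x] vabs_nonneg[of y]
  by (meson inf.boundedI order.antisym)

lemma disj_vabs_mono: "vabs x \<le> vabs x' \<Longrightarrow> vabs y \<le> vabs y' \<Longrightarrow> disj x' y' \<Longrightarrow> disj x y"
  using inf_mono[of "vabs x" "vabs x'" "vabs y" "vabs y'"]
  by (intro disj_if_inf_le_0) (simp add: disj_def)

lemma disj_if_bounded:
  assumes "vabs x \<le> k *\<^sub>R p" "vabs y \<le> k *\<^sub>R q" "0 \<le> k" "inf p q = 0"
  shows "disj x y"
proof (rule disj_if_inf_le_0)
  have "inf (vabs x) (vabs y) \<le> inf (k *\<^sub>R p) (k *\<^sub>R q)" using assms(1,2) by (rule inf_mono)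
  also have "\<dots> = 0" using assms(3,4) by (simp flip: scaleR_inf_distrib)
  finally show "inf (vabs x) (vabs y) \<le> 0" .
qed

lemma disj_add:
  assumes "disj x z" "disj y z"
  shows "disj (x + y) z"
proof (rule disj_if_inf_le_0)
  have "inf (vabs (x + y)) (vabs z) \<le> inf (vabs x + vabs y) (vabs z)"
    using vabs_triangle by (rule inf_mono) simp
  also have "\<dots> \<le> inf (vabs x) (vabs z) + inf (vabs y) (vabs z)"
    by (rule inf_add_le_add_inf) (simp_all add: vabs_nonneg)
  finally show "inf (vabs (x + y)) (vabs z) \<le> 0" using assms by (simp add: disj_def)
qed

lemma disj_scaleR:
  assumes "disj x z"
  shows "disj (c *\<^sub>R x) z"
proof -
  define k where "k = max \<bar>c\<bar> 1"
  have "vabs (c *\<^sub>R x) \<le> k *\<^sub>R vabs x"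
    unfolding vabs_scaleR k_def by (rule scaleR_right_mono) (simp_all add: vabs_nonneg)
  moreover have "vabs z \<le> k *\<^sub>R vabs z"
    using scaleR_right_mono[of 1 k "vabs z"] by (simp add: k_def vabs_nonneg)
  ultimately show ?thesis
    using assms by (intro disj_if_bounded[of _ k "vabs x" _ "vabs z"]) (simp_all add: k_def disj_def)
qed

lemma vabs_le_vabs_add_if_disj:
  assumes "disj x y"
  shows "vabs x \<le> vabs (x + y)"
proof -
  let ?p = "vabs x" and ?q = "vabs y"
  have "sup ?p ?q - inf ?p ?q = sup (sup 0 (?q - ?p)) (sup (?p - ?q) 0)"
    by (simp only: diff_conv_add_uminus vl_neg_inf_eq_sup vl_add_sup_inf_distribs) simp
  also have "\<dots> \<le> vabs (x + y)"
    using vabs_nonneg vabs_diff_le_vabs_add[of x y] vabs_diff_le_vabs_add[of y x]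
    by (simp add: add.commute)
  finally show ?thesis using assms by (simp add: disj_def)
qed

lemma fragment_vabs_le:
  assumes "fragment g x"
  shows "vabs g \<le> vabs x" "vabs (x - g) \<le> vabs x"
  using vabs_le_vabs_add_if_disj[of g "x - g"] vabs_le_vabs_add_if_disj[of "x - g" g] assms
  by (simp_all add: fragment_def disj_sym)

lemma fragment_zero: "fragment 0 x" and fragment_self: "fragment x x"
  by (simp_all add: fragment_def disj_zero disj_sym)

lemma fragment_add:
  assumes "disj x y" "fragment g x" "fragment h y"
  shows "fragment (g + h) (x + y)"
proof -
  have "disj g (x - g)" "disj h (y - h)" using assms(2,3) by (simp_all add: fragment_def)
  moreover have "disj g (y - h)" "disj h (x - g)"
    using assms fragment_vabs_le by (meson disj_vabs_mono disj_sym)+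
  ultimately have "disj (g + h) ((x - g) + (y - h))"
    by (meson disj_add disj_sym)
  then show ?thesis by (simp add: fragment_def algebra_simps)
qed

lemma vabs_add_le_double: "vabs x \<le> r \<Longrightarrow> vabs y \<le> r \<Longrightarrow> vabs (x + y) \<le> 2 *\<^sub>R r"
  using vabs_triangle[of x y] by (simp add: scaleR_2 add_mono order.trans)

lemma vabs_diff_le_double: "vabs x \<le> r \<Longrightarrow> vabs y \<le> r \<Longrightarrow> vabs (x - y) \<le> 2 *\<^sub>R r"
  using vabs_add_le_double[of x r "- y"] by (simp add: vabs_minus)

lemma decompose_below_disjoint_sum:
  fixes w p q :: "'a::{ordered_real_vector,lattice}"
  assumes "0 \<le> w" "0 \<le> p" "0 \<le> q" "inf p q = 0" "w \<le> p + q"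
  shows "w = inf w p + inf w q"
proof (rule order.antisym)
  have "w = inf (p + q) w" using assms(5) by (simp add: inf.absorb2)
  also have "\<dots> \<le> inf p w + inf q w" using assms(1-3) by (intro inf_add_le_add_inf)
  finally show "w \<le> inf w p + inf w q" by (simp add: inf_commute)
  have "inf (inf w p) (inf w q) \<le> inf p q" by (intro inf_mono) simp_all
  then have "inf (inf w p) (inf w q) = 0" using assms(1-4) by (simp add: order.antisym)
  then show "inf w p + inf w q \<le> w"
    using vl_add_eq_inf_sup[of "inf w p" "inf w q"] by simp
qed

lemma riesz_decomposition:
  assumes "0 \<le> p" "0 \<le> q" "inf p q = 0" "vabs z \<le> p + q"
  obtains z1 z2 where "z = z1 + z2" "vabs z1 \<le> 2 *\<^sub>R p" "vabs z2 \<le> 2 *\<^sub>R q"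
proof
  let ?z1 = "inf (pos_part z) p - inf (neg_part z) p"
  let ?z2 = "inf (pos_part z) q - inf (neg_part z) q"
  have "pos_part z = inf (pos_part z) p + inf (pos_part z) q"
    "neg_part z = inf (neg_part z) p + inf (neg_part z) q"
    by (rule decompose_below_disjoint_sum[OF _ assms(1-3)],
        simp_all add: pos_part_nonneg neg_part_nonneg
          order.trans[OF pos_part_le_vabs assms(4)] order.trans[OF neg_part_le_vabs assms(4)])+
  then show "z = ?z1 + ?z2"
    using pos_part_minus_neg_part[of z] by (metis add_diff_add)
  have bound: "vabs (inf a r - inf b r) \<le> 2 *\<^sub>R r" if "0 \<le> a" "0 \<le> b" "0 \<le> r" for a b r :: 'a
    using that by (intro vabs_diff_le_double) (simp_all add: vabs_of_nonneg)
  show "vabs ?z1 \<le> 2 *\<^sub>R p" "vabs ?z2 \<le> 2 *\<^sub>R q"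
    using assms by (simp_all add: bound pos_part_nonneg neg_part_nonneg)
qed

lemma bounded_decomposition_unique:
  assumes "0 \<le> k" "inf p q = 0" "a + b = a' + b'"
    and "vabs a \<le> k *\<^sub>R p" "vabs a' \<le> k *\<^sub>R p" "vabs b \<le> k *\<^sub>R q" "vabs b' \<le> k *\<^sub>R q"
  shows "a = a'"
proof -
  have "vabs (a - a') \<le> (2 * k) *\<^sub>R p"
    using vabs_diff_le_double[OF assms(4,5)] by simp
  moreover have "a - a' = b' - b" using assms(3) by (simp add: algebra_simps)
  then have "vabs (a - a') \<le> (2 * k) *\<^sub>R q"
    using vabs_diff_le_double[OF assms(7,6)] by simp
  ultimately have "disj (a - a') (a - a')"
    using assms(1,2) by (intro disj_if_bounded[of _ "2 * k" p _ q]) simp_all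
  then show ?thesis using disj_self_eq_0 by fastforce
qed

lemma fragment_split:
  assumes xy: "disj x y" and g: "fragment g (x + y)"
  obtains g1 g2 where "g = g1 + g2" "fragment g1 x" "fragment g2 y"
proof -
  let ?p = "vabs x" and ?q = "vabs y"
  define h where "h = x + y - g"
  have pq: "0 \<le> ?p" "0 \<le> ?q" "inf ?p ?q = 0" using xy by (simp_all add: vabs_nonneg disj_def)
  have gh: "disj g h" using g by (simp add: fragment_def h_def)
  have "vabs g \<le> ?p + ?q" "vabs h \<le> ?p + ?q"
    using fragment_vabs_le[OF g] vabs_triangle[of x y] by (auto simp: h_def)
  then obtain g1 g2 h1 h2 where G: "g = g1 + g2" "vabs g1 \<le> 2 *\<^sub>R ?p" "vabs g2 \<le> 2 *\<^sub>R ?q"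
    and H: "h = h1 + h2" "vabs h1 \<le> 2 *\<^sub>R ?p" "vabs h2 \<le> 2 *\<^sub>R ?q"
    using riesz_decomposition[OF pq] by metis
  have "disj g1 g2" "disj h1 h2" using G H pq by (auto intro: disj_if_bounded)
  then have small: "vabs g1 \<le> vabs g" "vabs g2 \<le> vabs g" "vabs h1 \<le> vabs h" "vabs h2 \<le> vabs h"
    using G(1) H(1) vabs_le_vabs_add_if_disj disj_sym by (metis add.commute)+
  have le4: "vabs u \<le> 4 *\<^sub>R vabs u" for u :: 'a
    using scaleR_right_mono[of 1 4 "vabs u"] by (simp add: vabs_nonneg)
  have sum: "(g1 + h1) + (g2 + h2) = x + y" using G(1) H(1) by (simp add: h_def algebra_simps)
  have "vabs (g1 + h1) \<le> 4 *\<^sub>R ?p" "vabs (g2 + h2) \<le> 4 *\<^sub>R ?q"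
    using vabs_add_le_double[OF G(2) H(2)] vabs_add_le_double[OF G(3) H(3)] by simp_all
  then have x: "g1 + h1 = x"
    using bounded_decomposition_unique[OF _ pq(3) sum _ le4 _ le4] by simp
  then have y: "g2 + h2 = y" using sum by simp
  have "fragment g1 x" "fragment g2 y"
    using gh small x y by (auto simp: fragment_def algebra_simps intro: disj_vabs_mono)
  with G(1) show thesis by (rule that)
qed

section \<open>Bands and projections in Dedekind complete vector lattices\<close>

lemma mem_disj_compl: "y \<in> disj_compl X \<longleftrightarrow> (\<forall>x\<in>X. disj x y)"
  by (simp add: disj_compl_def)

lemma disj_compl_antimono: "X \<subseteq> Y \<Longrightarrow> disj_compl Y \<subseteq> disj_compl X"
  by (auto simp: disj_compl_def)

lemma subset_disj_compl_disj_compl: "X \<subseteq> disj_compl (disj_compl X)"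
  by (auto simp: disj_compl_def intro: disj_sym)

lemma eq_0_if_mem_disj_compl: "x \<in> X \<Longrightarrow> x \<in> disj_compl X \<Longrightarrow> x = 0"
  by (auto simp: disj_compl_def intro: disj_self_eq_0)

lemma band_zero: "band B \<Longrightarrow> 0 \<in> B"
  and band_add: "band B \<Longrightarrow> x \<in> B \<Longrightarrow> y \<in> B \<Longrightarrow> x + y \<in> B"
  and band_scaleR: "band B \<Longrightarrow> x \<in> B \<Longrightarrow> c *\<^sub>R x \<in> B"
  and band_solid: "band B \<Longrightarrow> x \<in> B \<Longrightarrow> vabs y \<le> vabs x \<Longrightarrow> y \<in> B"
  and band_cSup: "band B \<Longrightarrow> D \<subseteq> B \<Longrightarrow> D \<noteq> {} \<Longrightarrow> bdd_above D \<Longrightarrow> Sup D \<in> B"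
  by (simp_all add: band_def)

lemma band_diff: "band B \<Longrightarrow> x \<in> B \<Longrightarrow> y \<in> B \<Longrightarrow> x - y \<in> B"
  using band_add[of B x "(- 1) *\<^sub>R y"] band_scaleR[of B y "- 1"] by simp

lemma band_nonneg_below:
  assumes "band B" "x \<in> B" "0 \<le> y" "y \<le> x"
  shows "y \<in> B"
proof (rule band_solid[OF assms(1,2)])
  show "vabs y \<le> vabs x"
    using assms(3,4) vabs_ge(1)[of x] by (simp add: vabs_of_nonneg)
qed

lemma inf_cSup_le:
  fixes c m :: "'b::{ordered_real_vector, conditionally_complete_lattice}"
  assumes "D \<noteq> {}" "bdd_above D" "\<And>d. d \<in> D \<Longrightarrow> inf d c \<le> m"
  shows "inf (Sup D) c \<le> m"
proof -
  have "Sup D \<le> m + sup (Sup D) c - c"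
  proof (rule cSup_least[OF assms(1)])
    fix d assume d: "d \<in> D"
    have "d + c = sup d c + inf d c" by (rule vl_add_eq_inf_sup)
    also have "\<dots> \<le> sup (Sup D) c + m"
      using cSup_upper[OF d assms(2)] assms(3)[OF d] by (intro add_mono) (simp_all add: le_supI1)
    finally show "d \<le> m + sup (Sup D) c - c" by (simp add: algebra_simps)
  qed
  then show ?thesis
    using vl_add_eq_inf_sup[of "Sup D" c] by (simp add: algebra_simps)
qed

lemma mono_pos_part: "mono pos_part"
  by (rule monoI) (rule pos_part_mono)

lemma vabs_cSup_le:
  fixes D :: "'b::{ordered_real_vector, conditionally_complete_lattice} set"
  assumes "d \<in> D" "bdd_above D"
  shows "vabs (Sup D) \<le> Sup (pos_part ` D) + vabs d"
proof -
  have bdd: "bdd_above (pos_part ` D)"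
    using mono_pos_part assms(2) by (rule bdd_above_image_mono)
  have "Sup D \<le> Sup (pos_part ` D)"
    using assms bdd le_pos_part by (intro cSup_mono) auto
  moreover have "0 \<le> Sup (pos_part ` D)"
    using assms(1) bdd pos_part_nonneg by (meson cSup_upper imageI order.trans)
  ultimately have "pos_part (Sup D) \<le> Sup (pos_part ` D)" by (simp add: pos_part_def)
  moreover have "neg_part (Sup D) \<le> vabs d"
    using cSup_upper[OF assms] vabs_ge(2)[of d] vabs_nonneg[of d]
    by (simp add: neg_part_def order.trans[of "- Sup D" "- d"])
  ultimately show ?thesis by (metis add_mono pos_part_add_neg_part)
qed

lemma cSup_mem_disj_compl:
  fixes D :: "'b::{ordered_real_vector, conditionally_complete_lattice} set"
  assumes "D \<subseteq> disj_compl X" "d \<in> D" "bdd_above D"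
  shows "Sup D \<in> disj_compl X"
  unfolding mem_disj_compl
proof
  fix x assume "x \<in> X"
  then have dx: "inf (vabs d') (vabs x) = 0" if "d' \<in> D" for d'
    using assms(1) that by (auto simp: mem_disj_compl disj_def inf_commute subset_iff)
  let ?P = "Sup (pos_part ` D)"
  have bdd: "bdd_above (pos_part ` D)"
    using mono_pos_part assms(3) by (rule bdd_above_image_mono)
  have P: "inf ?P (vabs x) \<le> 0"
  proof (rule inf_cSup_le)
    fix e assume "e \<in> pos_part ` D"
    then obtain d' where "d' \<in> D" "e = pos_part d'" by blast
    then show "inf e (vabs x) \<le> 0"
      using dx[of d'] pos_part_le_vabs[of d'] by (metis inf_mono order_refl)
  qed (use assms(2) bdd in auto)
  have P0: "0 \<le> ?P"
    using cSup_upper[OF imageI[OF assms(2)] bdd] pos_part_nonneg[of d] by simp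
  have "inf (vabs (Sup D)) (vabs x) \<le> inf (?P + vabs d) (vabs x)"
    using vabs_cSup_le[OF assms(2,3)] by (simp add: le_infI1)
  also have "\<dots> \<le> inf ?P (vabs x) + inf (vabs d) (vabs x)"
    using P0 by (intro inf_add_le_add_inf) (simp_all add: vabs_nonneg)
  also have "\<dots> \<le> 0" using P dx[OF assms(2)] by simp
  finally show "disj x (Sup D)" by (blast intro: disj_sym disj_if_inf_le_0)
qed

lemma band_disj_compl: "band (disj_compl X)"
  unfolding band_def
proof (intro conjI ballI allI impI)
  fix D assume "D \<subseteq> disj_compl X \<and> D \<noteq> {} \<and> bdd_above D"
  then show "Sup D \<in> disj_compl X" using cSup_mem_disj_compl by blast
qed (auto simp: mem_disj_compl disj_zero intro: disj_vabs_mono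
      disj_add[THEN disj_sym] disj_scaleR[THEN disj_sym] disj_sym)

lemma eq_0_if_multiples_bounded:
  fixes a u :: "'b::{ordered_real_vector, conditionally_complete_lattice}"
  assumes "0 \<le> a" "\<And>n. real n *\<^sub>R a \<le> u"
  shows "a = 0"
proof -
  let ?M = "range (\<lambda>n::nat. real n *\<^sub>R a)"
  have bdd: "bdd_above ?M" using assms(2) by (auto simp: bdd_above_def)
  have "Sup ?M \<le> Sup ?M - a"
  proof (rule cSup_least)
    fix d assume "d \<in> ?M"
    then obtain n where "d = real n *\<^sub>R a" by blast
    moreover have "real (Suc n) *\<^sub>R a \<le> Sup ?M" using bdd by (blast intro: cSup_upper)
    ultimately show "d \<le> Sup ?M - a" by (simp add: scaleR_left_distrib le_diff_eq add.commute)
  qed simp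
  then show ?thesis using assms(1) by simp
qed

lemma nonpos_if_le_scaleR_all:
  fixes y u :: "'b::{ordered_real_vector, conditionally_complete_lattice}"
  assumes "0 \<le> u" "\<And>\<epsilon>::real. \<epsilon> > 0 \<Longrightarrow> y \<le> \<epsilon> *\<^sub>R u"
  shows "y \<le> 0"
proof -
  have "real n *\<^sub>R pos_part y \<le> u" for n
  proof (cases "n = 0")
    case False
    then have "real n *\<^sub>R y \<le> u"
      using assms(2)[of "1 / real n"] by (simp add: pos_le_divideR_eq[symmetric] divide_inverse_commute)
    then show ?thesis
      using assms(1) by (simp add: pos_part_def scaleR_sup_distrib)
  qed (simp add: assms(1))
  then have "pos_part y = 0" by (rule eq_0_if_multiples_bounded[OF pos_part_nonneg])
  then show ?thesis by (simp add: pos_part_eq_0_iff)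
qed

text \<open>The supremum \<open>s\<close> is the component of \<open>w\<close> in the band generated by \<open>p\<close>.\<close>

lemma disj_sub_Sup_inf_multiples:
  fixes w p :: "'b::{ordered_real_vector, conditionally_complete_lattice}"
  assumes "0 \<le> w" "0 \<le> p"
  defines "s \<equiv> Sup (range (\<lambda>n::nat. inf w (real n *\<^sub>R p)))"
  shows "s \<le> w" "disj (w - s) p"
proof -
  define f where "f n = inf w (real n *\<^sub>R p)" for n :: nat
  have bdd: "bdd_above (range f)" by (auto simp: bdd_above_def f_def intro!: exI[of _ w])
  have fs: "f n \<le> s" for n unfolding s_def f_def[symmetric] using bdd by (blast intro: cSup_upper)
  show sw: "s \<le> w" unfolding s_def f_def[symmetric] by (rule cSup_least) (auto simp: f_def)
  define c where "c = inf (w - s) p"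
  have step: "f n + c \<le> f (Suc n)" for n
  proof -
    have "f n + c \<le> s + (w - s)" using fs[of n] by (intro add_mono) (simp_all add: c_def)
    moreover have "f n + c \<le> real n *\<^sub>R p + p" by (intro add_mono) (simp_all add: c_def f_def)
    ultimately show ?thesis by (simp add: f_def scaleR_left_distrib add.commute)
  qed
  have multiples: "real n *\<^sub>R c \<le> f n" for n
  proof (induction n)
    case (Suc n)
    have "real (Suc n) *\<^sub>R c \<le> f n + c" using Suc by (simp add: scaleR_left_distrib)
    then show ?case using step[of n] by (rule order.trans)
  qed (simp add: f_def inf.absorb2 assms)
  have "c = 0"
    using sw assms(2) order.trans[OF multiples fs] by (intro eq_0_if_multiples_bounded[of c s]) (simp_all add: c_def)
  then show "disj (w - s) p" using sw assms(2) by (simp add: c_def disj_of_nonneg)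
qed

lemma principal_band_decomposition:
  fixes p z :: "'b::{ordered_real_vector, conditionally_complete_lattice}"
  assumes "0 \<le> p"
  shows "\<exists>b \<in> disj_compl (disj_compl {p}). z - b \<in> disj_compl {p}"
proof -
  let ?B = "disj_compl (disj_compl {p})"
  have B: "band ?B" and C: "band (disj_compl {p})" by (rule band_disj_compl)+
  have pB: "p \<in> ?B" using subset_disj_compl_disj_compl by blast
  have nonneg: "\<exists>b \<in> ?B. w - b \<in> disj_compl {p}" if w: "0 \<le> w" for w
  proof
    let ?s = "Sup (range (\<lambda>n::nat. inf w (real n *\<^sub>R p)))"
    have "inf w (real n *\<^sub>R p) \<in> ?B" for n
      using w assms by (intro band_nonneg_below[OF B band_scaleR[OF B pB, of "real n"]]) (simp_all add: scaleR_nonneg_nonneg)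
    then show "?s \<in> ?B"
      by (intro band_cSup[OF B]) (auto simp: bdd_above_def intro!: exI[of _ w])
    show "w - ?s \<in> disj_compl {p}"
      using disj_sub_Sup_inf_multiples(2)[OF w assms] by (simp add: mem_disj_compl disj_sym)
  qed
  obtain b1 b2 where "b1 \<in> ?B" "pos_part z - b1 \<in> disj_compl {p}"
    and "b2 \<in> ?B" "neg_part z - b2 \<in> disj_compl {p}"
    using nonneg[OF pos_part_nonneg] nonneg[OF neg_part_nonneg] by blast
  then have "b1 - b2 \<in> ?B" "(pos_part z - b1) - (neg_part z - b2) \<in> disj_compl {p}"
    using band_diff[OF B] band_diff[OF C] by blast+
  moreover have "(pos_part z - b1) - (neg_part z - b2) = z - (b1 - b2)"
    using pos_part_minus_neg_part[of z] by (simp add: algebra_simps)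
  ultimately show ?thesis by metis
qed

definition band_proj_onto :: "('b::{ordered_real_vector, conditionally_complete_lattice} \<Rightarrow> 'b) \<Rightarrow> 'b set \<Rightarrow> bool" where
  "band_proj_onto \<rho> B \<longleftrightarrow> band B \<and> (\<forall>x. \<rho> x \<in> B \<and> x - \<rho> x \<in> disj_compl B)"

lemma band_proj_iff_onto: "band_proj \<rho> \<longleftrightarrow> (\<exists>B. band_proj_onto \<rho> B)"
  by (simp add: band_proj_def band_proj_onto_def)

lemma band_proj_ontoD:
  assumes "band_proj_onto \<rho> B"
  shows "band B" "\<rho> x \<in> B" "x - \<rho> x \<in> disj_compl B"
  using assms by (simp_all add: band_proj_onto_def)

lemma band_proj_onto_eqI:
  assumes "band_proj_onto \<rho> B" "b \<in> B" "z - b \<in> disj_compl B"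
  shows "\<rho> z = b"
proof -
  have "\<rho> z - b \<in> B" by (rule band_diff[OF band_proj_ontoD(1,2)[OF assms(1)] assms(2)])
  moreover have "(z - b) - (z - \<rho> z) \<in> disj_compl B"
    by (rule band_diff[OF band_disj_compl assms(3) band_proj_ontoD(3)[OF assms(1)]])
  then have "\<rho> z - b \<in> disj_compl B" by simp
  ultimately have "\<rho> z - b = 0" by (rule eq_0_if_mem_disj_compl)
  then show ?thesis by simp
qed

lemma band_proj_onto_fixes: "band_proj_onto \<rho> B \<Longrightarrow> b \<in> B \<Longrightarrow> \<rho> b = b"
  by (rule band_proj_onto_eqI) (simp_all add: band_zero band_disj_compl)

lemma band_proj_onto_eq_0: "band_proj_onto \<rho> B \<Longrightarrow> z \<in> disj_compl B \<Longrightarrow> \<rho> z = 0"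
  by (rule band_proj_onto_eqI) (simp_all add: band_zero band_proj_ontoD(1))

lemma band_proj_onto_range: "band_proj \<rho> \<Longrightarrow> band_proj_onto \<rho> (range \<rho>)"
proof -
  assume "band_proj \<rho>"
  then obtain B where B: "band_proj_onto \<rho> B" by (auto simp: band_proj_iff_onto)
  have "range \<rho> = B"
  proof
    show "range \<rho> \<subseteq> B" using band_proj_ontoD(2)[OF B] by blast
    show "B \<subseteq> range \<rho>" using band_proj_onto_fixes[OF B] by (metis rangeI subsetI)
  qed
  with B show ?thesis by simp
qed

lemma band_proj_onto_compl:
  "band_proj_onto \<rho> B \<Longrightarrow> band_proj_onto (\<lambda>z. z - \<rho> z) (disj_compl B)"
  using subset_disj_compl_disj_compl[of B]
  by (auto simp: band_proj_onto_def band_disj_compl)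

lemma nonneg_if_disj_add_nonneg:
  assumes "disj x y" "0 \<le> x + y"
  shows "0 \<le> x"
proof -
  have "- x \<le> y" using add_right_mono[OF assms(2), of "- x"] by simp
  then have "neg_part x \<le> pos_part y" by (simp add: neg_part_def pos_part_def le_supI1)
  also have "pos_part y \<le> vabs y" by (rule pos_part_le_vabs)
  finally have "neg_part x \<le> inf (vabs x) (vabs y)" using neg_part_le_vabs[of x] by simp
  also have "\<dots> = 0" using assms(1) by (simp add: disj_def)
  finally have "neg_part x = 0" using neg_part_nonneg[of x] by (intro order.antisym)
  then show ?thesis using pos_part_minus_neg_part[of x] pos_part_nonneg[of x] by simp
qed

lemma band_proj_add: "band_proj \<rho> \<Longrightarrow> \<rho> (x + y) = \<rho> x + \<rho> y"
proof -
  assume "band_proj \<rho>"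
  then obtain B where B: "band_proj_onto \<rho> B" by (auto simp: band_proj_iff_onto)
  have "(x - \<rho> x) + (y - \<rho> y) \<in> disj_compl B"
    by (rule band_add[OF band_disj_compl]; rule band_proj_ontoD(3)[OF B])
  then show ?thesis
    by (intro band_proj_onto_eqI[OF B] band_add[OF band_proj_ontoD(1,2)[OF B] band_proj_ontoD(2)[OF B]])
      (simp add: algebra_simps)
qed

lemma band_proj_diff: "band_proj \<rho> \<Longrightarrow> \<rho> (x - y) = \<rho> x - \<rho> y"
  using band_proj_add[of \<rho> "x - y" y] by simp

lemma band_proj_zero: "band_proj \<rho> \<Longrightarrow> \<rho> 0 = 0"
  using band_proj_diff[of \<rho> 0 0] by simp

lemma band_proj_nonneg_le:
  assumes "band_proj \<rho>" "0 \<le> z"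
  shows "0 \<le> \<rho> z" "\<rho> z \<le> z"
proof -
  have d: "disj (\<rho> z) (z - \<rho> z)"
    using band_proj_onto_range[OF assms(1)] by (auto simp: band_proj_onto_def mem_disj_compl)
  show "0 \<le> \<rho> z" using nonneg_if_disj_add_nonneg[OF d] assms(2) by simp
  show "\<rho> z \<le> z" using nonneg_if_disj_add_nonneg[OF disj_sym[OF d]] assms(2) by simp
qed

lemma band_proj_mono: "band_proj \<rho> \<Longrightarrow> x \<le> y \<Longrightarrow> \<rho> x \<le> \<rho> y"
  using band_proj_nonneg_le(1)[of \<rho> "y - x"] by (simp add: band_proj_diff)

lemma band_proj_idem: "band_proj \<rho> \<Longrightarrow> \<rho> (\<rho> z) = \<rho> z"
  using band_proj_onto_fixes[OF band_proj_onto_range] by blast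

lemma band_proj_pos_part_eq_0:
  assumes "band_proj \<rho>" "\<rho> y \<le> 0"
  shows "\<rho> (pos_part y) = 0"
proof -
  have "\<rho> (pos_part y) = \<rho> y + \<rho> (neg_part y)"
    using band_proj_diff[OF assms(1), of "pos_part y" "neg_part y"] by (simp add: pos_part_minus_neg_part)
  also have "\<dots> \<le> neg_part y"
    using add_mono[OF assms(2) band_proj_nonneg_le(2)[OF assms(1) neg_part_nonneg]] by simp
  finally have "\<rho> (pos_part y) \<le> inf (pos_part y) (neg_part y)"
    using band_proj_nonneg_le(2)[OF assms(1) pos_part_nonneg] by simp
  then show ?thesis
    using band_proj_nonneg_le(1)[OF assms(1) pos_part_nonneg] by (simp add: inf_pos_part_neg_part order.antisym)
qed

text \<open>Only meaningful for \<open>0 \<le> p\<close>, where \<open>principal_band_decomposition\<close> provides the witness.\<close>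

definition principal_proj :: "'b::{ordered_real_vector, conditionally_complete_lattice} \<Rightarrow> 'b \<Rightarrow> 'b" where
  "principal_proj p z = (SOME b. b \<in> disj_compl (disj_compl {p}) \<and> z - b \<in> disj_compl {p})"

lemma principal_proj_onto:
  assumes "0 \<le> p"
  shows "band_proj_onto (principal_proj p) (disj_compl (disj_compl {p}))"
proof -
  have "principal_proj p z \<in> disj_compl (disj_compl {p}) \<and> z - principal_proj p z \<in> disj_compl {p}" for z
    unfolding principal_proj_def using principal_band_decomposition[OF assms, of z] by (rule someI2_bex)
  then show ?thesis
    using subset_disj_compl_disj_compl[of "disj_compl {p}"]
    by (auto simp: band_proj_onto_def band_disj_compl)
qed

lemma band_proj_principal_proj: "0 \<le> p \<Longrightarrow> band_proj (principal_proj p)"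
  using principal_proj_onto band_proj_iff_onto by blast

lemma principal_proj_self: "0 \<le> p \<Longrightarrow> principal_proj p p = p"
  using principal_proj_onto subset_disj_compl_disj_compl by (blast intro: band_proj_onto_fixes)

lemma principal_proj_eq_0: "0 \<le> p \<Longrightarrow> disj p z \<Longrightarrow> principal_proj p z = 0"
  using subset_disj_compl_disj_compl[of "disj_compl {p}"]
  by (intro band_proj_onto_eq_0[OF principal_proj_onto]) (auto simp: mem_disj_compl)

lemma band_proj_principal_proj_eq_0:
  assumes "band_proj \<rho>" "0 \<le> p" "\<rho> p = 0"
  shows "\<rho> (principal_proj p z) = 0"
proof -
  have R: "band_proj_onto \<rho> (range \<rho>)" by (rule band_proj_onto_range[OF assms(1)])
  have "p \<in> disj_compl (range \<rho>)" using band_proj_ontoD(3)[OF R, of p] assms(3) by simp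
  then have "range \<rho> \<subseteq> disj_compl {p}" by (auto simp: mem_disj_compl disj_sym)
  then have "disj_compl (disj_compl {p}) \<subseteq> disj_compl (range \<rho>)" by (rule disj_compl_antimono)
  then show ?thesis
    using band_proj_ontoD(2)[OF principal_proj_onto[OF assms(2)]] band_proj_onto_eq_0[OF R] by blast
qed

lemma partition_of_unity_eq_0:
  fixes x :: "'b::{ordered_real_vector, conditionally_complete_lattice}"
  assumes A: "partition_of_unity A \<rho>" and x: "0 \<le> x" "\<forall>\<alpha>\<in>A. \<rho> \<alpha> x = 0"
  shows "x = 0"
proof -
  let ?\<pi> = "\<lambda>z. z - principal_proj x z"
  have \<pi>: "band_proj ?\<pi>"
    using band_proj_onto_compl[OF principal_proj_onto[OF x(1)]] band_proj_iff_onto by blast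
  have "proj_le (\<rho> \<alpha>) ?\<pi>" if "\<alpha> \<in> A" for \<alpha>
    unfolding proj_le_def
  proof (intro allI impI)
    fix z :: 'b assume z: "0 \<le> z"
    have \<rho>: "band_proj (\<rho> \<alpha>)" using A that by (simp add: partition_of_unity_def)
    have "\<rho> \<alpha> z = \<rho> \<alpha> (?\<pi> z)"
      using band_proj_principal_proj_eq_0[OF \<rho> x(1)] x(2) that by (simp add: band_proj_diff[OF \<rho>])
    also have "\<dots> \<le> ?\<pi> z" by (rule band_proj_nonneg_le(2)[OF \<rho> band_proj_nonneg_le(1)[OF \<pi> z]])
    finally show "\<rho> \<alpha> z \<le> ?\<pi> z" .
  qed
  then have "?\<pi> = id" using A \<pi> by (simp add: partition_of_unity_def)
  then have "x - principal_proj x x = x" by (metis id_apply)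
  then have "principal_proj x x = 0" by simp
  then show ?thesis by (simp add: principal_proj_self[OF x(1)])
qed

section \<open>Partitions of unity force the infimum to vanish\<close>

lemma orth_additive_fragment:
  assumes "orth_additive Q" "fragment g e"
  shows "Q e = Q g + Q (e - g)"
proof -
  have "Q (g + (e - g)) = Q g + Q (e - g)"
    using assms unfolding orth_additive_def fragment_def by blast
  then show ?thesis by simp
qed

lemma orth_additive_zero: "orth_additive Q \<Longrightarrow> Q 0 = 0"
  using orth_additive_fragment[OF _ fragment_zero, of Q 0] by simp

lemma le_scaleR_if_partition_bounds:
  assumes Q: "orth_additive Q" "op_le Q T" "op_le Q S"
    and \<rho>: "partition_of_unity A \<rho>"
    and ea: "\<forall>\<alpha>\<in>A. fragment (ea \<alpha>) e"
      "\<forall>\<alpha>\<in>A. \<rho> \<alpha> (T (ea \<alpha>)) \<le> \<epsilon> *\<^sub>R T e \<and> \<rho> \<alpha> (S (e - ea \<alpha>)) \<le> \<epsilon> *\<^sub>R S e"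
  shows "Q e \<le> \<epsilon> *\<^sub>R (T e + S e)"
proof -
  let ?u = "\<epsilon> *\<^sub>R (T e + S e)"
  have "\<rho> \<alpha> (pos_part (Q e - ?u)) = 0" if \<alpha>: "\<alpha> \<in> A" for \<alpha>
  proof (rule band_proj_pos_part_eq_0)
    let ?g = "ea \<alpha>"
    show P: "band_proj (\<rho> \<alpha>)" using \<rho> \<alpha> by (simp add: partition_of_unity_def)
    have "Q e = Q ?g + Q (e - ?g)" using orth_additive_fragment[OF Q(1)] ea(1) \<alpha> by blast
    also have "\<dots> \<le> T ?g + S (e - ?g)"
      using Q(2,3) by (simp add: op_le_def positive_op_def add_mono)
    finally have "\<rho> \<alpha> (Q e) \<le> \<rho> \<alpha> (T ?g + S (e - ?g))" by (rule band_proj_mono[OF P])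
    also have "\<dots> = \<rho> \<alpha> (T ?g) + \<rho> \<alpha> (S (e - ?g))" by (rule band_proj_add[OF P])
    also have "\<dots> \<le> ?u" using ea(2) \<alpha> by (simp add: add_mono scaleR_right_distrib)
    finally have "\<rho> \<alpha> (\<rho> \<alpha> (Q e)) \<le> \<rho> \<alpha> ?u" by (rule band_proj_mono[OF P])
    then show "\<rho> \<alpha> (Q e - ?u) \<le> 0" by (simp add: band_proj_idem[OF P] band_proj_diff[OF P])
  qed
  then have "pos_part (Q e - ?u) = 0"
    using partition_of_unity_eq_0[OF \<rho> pos_part_nonneg] by blast
  then show ?thesis by (simp add: pos_part_eq_0_iff)
qed

lemma is_inf_U_zero_if_partitions:
  fixes T S :: "'a::{ordered_real_vector, lattice} \<Rightarrow> 'b::{ordered_real_vector, conditionally_complete_lattice}"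
  assumes "positive_op T" "positive_op S"
    and partitions: "\<And>e \<epsilon>. \<epsilon> > 0 \<Longrightarrow> \<exists>(A :: 'i set) \<rho> ea. partition_of_unity A \<rho> \<and>
       (\<forall>\<alpha>\<in>A. fragment (ea \<alpha>) e) \<and>
       (\<forall>\<alpha>\<in>A. \<rho> \<alpha> (T (ea \<alpha>)) \<le> \<epsilon> *\<^sub>R T e \<and> \<rho> \<alpha> (S (e - ea \<alpha>)) \<le> \<epsilon> *\<^sub>R S e)"
  shows "is_inf_U T S (\<lambda>_. 0)"
  unfolding is_inf_U_def
proof (intro conjI allI impI)
  show "uryson (\<lambda>_::'a. 0::'b)"
    unfolding uryson_def orth_additive_def order_bounded_op_def by auto
  show "op_le (\<lambda>_. 0) T" "op_le (\<lambda>_. 0) S" using assms(1,2) by (simp_all add: op_le_def)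
  fix Q assume Q: "uryson Q \<and> op_le Q T \<and> op_le Q S"
  have "Q e \<le> 0" for e
  proof (rule nonpos_if_le_scaleR_all)
    show "0 \<le> T e + S e" using assms(1,2) by (simp add: positive_op_def)
    fix \<epsilon> :: real assume "\<epsilon> > 0"
    then show "Q e \<le> \<epsilon> *\<^sub>R (T e + S e)"
      using partitions Q le_scaleR_if_partition_bounds[of Q T S] by (metis uryson_def)
  qed
  then show "op_le Q (\<lambda>_. 0)" by (simp add: op_le_def positive_op_def)
qed

section \<open>Vanishing infimum yields partitions of unity\<close>

lemma cInf_add_sets:
  fixes A B :: "'b::{ordered_real_vector, conditionally_complete_lattice} set"
  assumes A: "A \<noteq> {}" "bdd_below A" and B: "B \<noteq> {}" "bdd_below B"
  shows "Inf {a + b | a b. a \<in> A \<and> b \<in> B} = Inf A + Inf B"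
proof -
  let ?C = "{a + b | a b. a \<in> A \<and> b \<in> B}"
  have C: "?C \<noteq> {}" using A B by blast
  have lower: "Inf A + Inf B \<le> c" if "c \<in> ?C" for c
    using that cInf_lower[OF _ A(2)] cInf_lower[OF _ B(2)] by (auto intro: add_mono)
  then have bdd: "bdd_below ?C" by (auto simp: bdd_below_def)
  have "Inf ?C - Inf A \<le> Inf B"
  proof (rule cInf_greatest[OF B(1)])
    fix b assume b: "b \<in> B"
    have "Inf ?C - b \<le> Inf A"
    proof (rule cInf_greatest[OF A(1)])
      fix a assume "a \<in> A"
      with b have "Inf ?C \<le> a + b" by (blast intro: cInf_lower[OF _ bdd])
      then show "Inf ?C - b \<le> a" by (simp add: diff_le_eq)
    qed
    then show "Inf ?C - Inf A \<le> b" by (simp add: diff_le_eq le_diff_eq add.commute)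
  qed
  then have "Inf ?C \<le> Inf A + Inf B" by (simp add: diff_le_eq add.commute)
  with cInf_greatest[OF C lower] show ?thesis by simp
qed

text \<open>\<open>Inf (fragment_sums T S f)\<close> is the formula for \<open>(T \<and> S) f\<close> in \<open>\<U>(E,F)\<close>.\<close>

definition fragment_sums :: "('a::{ordered_real_vector, lattice} \<Rightarrow> 'b::{ordered_real_vector, lattice}) \<Rightarrow> ('a \<Rightarrow> 'b) \<Rightarrow> 'a \<Rightarrow> 'b set" where
  "fragment_sums T S f = {T g + S (f - g) | g. fragment g f}"

lemma fragment_sums_nonempty: "fragment_sums T S f \<noteq> {}"
  using fragment_zero by (auto simp: fragment_sums_def)

lemma fragment_sums_nonneg:
  "positive_op T \<Longrightarrow> positive_op S \<Longrightarrow> w \<in> fragment_sums T S f \<Longrightarrow> 0 \<le> w"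
  by (auto simp: fragment_sums_def positive_op_def)

lemma bdd_below_fragment_sums:
  "positive_op T \<Longrightarrow> positive_op S \<Longrightarrow> bdd_below (fragment_sums T S f)"
  using fragment_sums_nonneg unfolding bdd_below_def by blast

lemma fragment_sums_add:
  assumes "orth_additive T" "orth_additive S" "disj x y"
  shows "fragment_sums T S (x + y) = {a + b | a b. a \<in> fragment_sums T S x \<and> b \<in> fragment_sums T S y}"
proof -
  have sum: "T (g + h) + S (x + y - (g + h)) = (T g + S (x - g)) + (T h + S (y - h))"
    if "fragment g x" "fragment h y" for g h
  proof -
    have "disj g h" "disj (x - g) (y - h)"
      using fragment_vabs_le[OF that(1)] fragment_vabs_le[OF that(2)] assms(3)
      by (blast intro: disj_vabs_mono)+
    then have "T (g + h) = T g + T h" "S ((x - g) + (y - h)) = S (x - g) + S (y - h)"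
      using assms(1,2) by (simp_all add: orth_additive_def)
    moreover have "x + y - (g + h) = (x - g) + (y - h)" by simp
    ultimately show ?thesis by (simp only: ac_simps)
  qed
  show ?thesis
  proof (intro set_eqI iffI)
    fix w assume "w \<in> fragment_sums T S (x + y)"
    then obtain f where "w = T f + S (x + y - f)" "fragment f (x + y)" by (auto simp: fragment_sums_def)
    moreover obtain g h where "f = g + h" "fragment g x" "fragment h y"
      using fragment_split[OF assms(3) \<open>fragment f (x + y)\<close>] by blast
    ultimately show "w \<in> {a + b | a b. a \<in> fragment_sums T S x \<and> b \<in> fragment_sums T S y}"
      using sum by (auto simp: fragment_sums_def)
  next
    fix w assume "w \<in> {a + b | a b. a \<in> fragment_sums T S x \<and> b \<in> fragment_sums T S y}"
    then obtain g h where "w = (T g + S (x - g)) + (T h + S (y - h))" "fragment g x" "fragment h y"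
      by (auto simp: fragment_sums_def)
    then show "w \<in> fragment_sums T S (x + y)"
      using sum fragment_add[OF assms(3)] unfolding fragment_sums_def by (metis (mono_tags, lifting) mem_Collect_eq)
  qed
qed

lemma uryson_Inf_fragment_sums:
  fixes T S :: "'a::{ordered_real_vector, lattice} \<Rightarrow> 'b::{ordered_real_vector, conditionally_complete_lattice}"
  assumes T: "uryson T" "positive_op T" and S: "orth_additive S" "positive_op S"
  defines "R \<equiv> \<lambda>f. Inf (fragment_sums T S f)"
  shows "uryson R" "op_le R T" "op_le R S"
proof -
  have To: "orth_additive T" using T(1) by (simp add: uryson_def)
  note bdd = bdd_below_fragment_sums[OF T(2) S(2)]
  have R0: "0 \<le> R f" for f
    unfolding R_def by (rule cInf_greatest[OF fragment_sums_nonempty]) (rule fragment_sums_nonneg[OF T(2) S(2)])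
  have "T f + S (f - f) \<in> fragment_sums T S f" "T 0 + S (f - 0) \<in> fragment_sums T S f" for f
    unfolding fragment_sums_def using fragment_self fragment_zero by blast+
  then have RT: "R f \<le> T f" and RS: "R f \<le> S f" for f
    using cInf_lower[OF _ bdd] orth_additive_zero[OF To] orth_additive_zero[OF S(1)] by (fastforce simp: R_def)+
  show "op_le R T" "op_le R S" using RT RS by (simp_all add: op_le_def positive_op_def)
  have "orth_additive R"
    unfolding orth_additive_def R_def
    using fragment_sums_add[OF To S(1)] cInf_add_sets[OF fragment_sums_nonempty bdd fragment_sums_nonempty bdd]
    by simp
  moreover have "order_bounded_op R"
    using T(1) R0 RT unfolding uryson_def order_bounded_op_def by (meson order.trans)
  ultimately show "uryson R" by (simp add: uryson_def)
qed

lemma nonpos_if_below_fragment_sums: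
  fixes T S :: "'a::{ordered_real_vector, lattice} \<Rightarrow> 'b::{ordered_real_vector, conditionally_complete_lattice}"
  assumes "uryson T" "positive_op T" "orth_additive S" "positive_op S" "is_inf_U T S (\<lambda>_. 0)"
    and "\<And>w. w \<in> fragment_sums T S e \<Longrightarrow> u \<le> w"
  shows "u \<le> 0"
proof -
  have "u \<le> Inf (fragment_sums T S e)"
    using assms(6) by (rule cInf_greatest[OF fragment_sums_nonempty])
  also have "\<dots> \<le> 0"
  proof -
    have "op_le (\<lambda>f. Inf (fragment_sums T S f)) (\<lambda>_. 0)"
      using assms(5) uryson_Inf_fragment_sums[OF assms(1-4)] unfolding is_inf_U_def by blast
    then show ?thesis by (simp add: op_le_def positive_op_def)
  qed
  finally show ?thesis .
qed

lemma band_proj_comp_if_le: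
  assumes \<mu>: "band_proj \<mu>" and \<pi>: "band_proj \<pi>" and le: "proj_le \<mu> \<pi>"
  shows "\<pi> (\<mu> z) = \<mu> z"
proof -
  have nonneg: "\<pi> (\<mu> w) = \<mu> w" if "0 \<le> w" for w
  proof (rule order.antisym)
    have "0 \<le> \<mu> w" using band_proj_nonneg_le(1)[OF \<mu> that] .
    then show "\<pi> (\<mu> w) \<le> \<mu> w" by (rule band_proj_nonneg_le(2)[OF \<pi>])
    show "\<mu> w \<le> \<pi> (\<mu> w)"
      using le \<open>0 \<le> \<mu> w\<close> band_proj_idem[OF \<mu>, of w] by (metis proj_le_def)
  qed
  have "\<mu> z = \<mu> (pos_part z) - \<mu> (neg_part z)"
    using band_proj_diff[OF \<mu>] pos_part_minus_neg_part[of z] by metis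
  then show ?thesis
    using band_proj_diff[OF \<pi>] nonneg[OF pos_part_nonneg] nonneg[OF neg_part_nonneg] by metis
qed

lemma principal_proj_disjoint_if_le:
  assumes \<mu>: "band_proj \<mu>" and \<pi>: "band_proj \<pi>" and le: "proj_le \<mu> \<pi>"
    and v: "0 \<le> v" "v \<in> disj_compl (range \<pi>)"
  shows "\<mu> (principal_proj v x) = 0" "principal_proj v (\<mu> x) = 0"
proof -
  have "\<pi> v = 0" using band_proj_onto_eq_0[OF band_proj_onto_range[OF \<pi>] v(2)] .
  moreover have "\<mu> v \<le> \<pi> v" using le v(1) by (simp add: proj_le_def)
  ultimately have "\<mu> v = 0" using band_proj_nonneg_le(1)[OF \<mu> v(1)] by simp
  then show "\<mu> (principal_proj v x) = 0" by (rule band_proj_principal_proj_eq_0[OF \<mu> v(1)])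
  have "\<mu> x \<in> range \<pi>" using band_proj_comp_if_le[OF assms(1-3)] by (metis rangeI)
  then have "disj v (\<mu> x)" using v(2) by (auto simp: mem_disj_compl disj_sym)
  then show "principal_proj v (\<mu> x) = 0" by (rule principal_proj_eq_0[OF v(1)])
qed

definition splitting_proj ::
  "('a::{ordered_real_vector, lattice} \<Rightarrow> 'b::{ordered_real_vector, conditionally_complete_lattice})
     \<Rightarrow> ('a \<Rightarrow> 'b) \<Rightarrow> 'a \<Rightarrow> real \<Rightarrow> ('b \<Rightarrow> 'b) \<Rightarrow> bool" where
  "splitting_proj T S e \<epsilon> \<sigma> \<longleftrightarrow> band_proj \<sigma> \<and>
     (\<exists>g. fragment g e \<and> \<sigma> (T g) \<le> \<epsilon> *\<^sub>R T e \<and> \<sigma> (S (e - g)) \<le> \<epsilon> *\<^sub>R S e)"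

text \<open>On the band of \<open>v\<close> the element \<open>u\<close> exceeds \<open>T g + S (e - g)\<close>, so both summands
  are projected below \<open>u\<close>.\<close>

lemma splitting_principal_proj_of_excess:
  assumes T: "positive_op T" and S: "positive_op S" and g: "fragment g e"
    and u: "0 \<le> u" "u \<le> \<epsilon> *\<^sub>R T e" "u \<le> \<epsilon> *\<^sub>R S e"
  defines "v \<equiv> pos_part (u - (T g + S (e - g)))"
  shows "splitting_proj T S e \<epsilon> (principal_proj v)"
proof -
  let ?\<sigma> = "principal_proj v" and ?w = "u - (T g + S (e - g))"
  have v0: "0 \<le> v" by (simp add: v_def pos_part_nonneg)
  have \<sigma>: "band_proj ?\<sigma>" by (rule band_proj_principal_proj[OF v0])
  have "disj v (neg_part ?w)"
    using inf_pos_part_neg_part by (simp add: v_def disj_of_nonneg pos_part_nonneg neg_part_nonneg)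
  then have "?\<sigma> (neg_part ?w) = 0" by (rule principal_proj_eq_0[OF v0])
  then have "?\<sigma> ?w = v"
    using band_proj_diff[OF \<sigma>, of v "neg_part ?w"] by (simp add: v_def pos_part_minus_neg_part principal_proj_self[OF v0[unfolded v_def]])
  moreover have "?\<sigma> ?w = ?\<sigma> u - (?\<sigma> (T g) + ?\<sigma> (S (e - g)))"
    by (simp add: band_proj_diff[OF \<sigma>] band_proj_add[OF \<sigma>])
  ultimately have "0 \<le> ?\<sigma> u - (?\<sigma> (T g) + ?\<sigma> (S (e - g)))" using v0 by simp
  then have "?\<sigma> (T g) + ?\<sigma> (S (e - g)) \<le> ?\<sigma> u" by (simp only: diff_ge_0_iff_ge)
  also have "\<dots> \<le> u" by (rule band_proj_nonneg_le(2)[OF \<sigma> u(1)])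
  finally have sum: "?\<sigma> (T g) + ?\<sigma> (S (e - g)) \<le> u" .
  have "0 \<le> ?\<sigma> (T g)" "0 \<le> ?\<sigma> (S (e - g))"
    using band_proj_nonneg_le(1)[OF \<sigma>] T S by (simp_all add: positive_op_def)
  then have "?\<sigma> (T g) \<le> u" "?\<sigma> (S (e - g)) \<le> u"
    using order.trans[OF add_increasing2[OF _ order_refl] sum] order.trans[OF add_increasing[OF _ order_refl] sum]
    by simp_all
  then have "?\<sigma> (T g) \<le> \<epsilon> *\<^sub>R T e" "?\<sigma> (S (e - g)) \<le> \<epsilon> *\<^sub>R S e"
    using order.trans[OF _ u(2)] order.trans[OF _ u(3)] by blast+
  with \<sigma> g show ?thesis unfolding splitting_proj_def by blast
qed

lemma splitting_principal_proj_if_disj: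
  assumes T: "orth_additive T" "positive_op T" and S: "orth_additive S" "positive_op S"
    and "0 \<le> \<epsilon>" "0 \<le> p"
  shows "inf p (T e) = 0 \<Longrightarrow> splitting_proj T S e \<epsilon> (principal_proj p)"
    and "inf p (S e) = 0 \<Longrightarrow> splitting_proj T S e \<epsilon> (principal_proj p)"
proof -
  have \<sigma>: "band_proj (principal_proj p)" by (rule band_proj_principal_proj[OF assms(6)])
  have Te: "0 \<le> T e" and Se: "0 \<le> S e" using T(2) S(2) by (simp_all add: positive_op_def)
  then have bounds: "0 \<le> \<epsilon> *\<^sub>R T e" "0 \<le> \<epsilon> *\<^sub>R S e" using assms(5) by (simp_all add: scaleR_nonneg_nonneg)
  have zero: "principal_proj p (T 0) = 0" "principal_proj p (S 0) = 0"
    by (simp_all add: orth_additive_zero T(1) S(1) band_proj_zero[OF \<sigma>])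
  show "splitting_proj T S e \<epsilon> (principal_proj p)" if "inf p (T e) = 0"
  proof -
    have "principal_proj p (T e) = 0"
      using that assms(6) Te by (simp add: principal_proj_eq_0 disj_of_nonneg)
    then show ?thesis
      using \<sigma> fragment_self[of e] zero bounds unfolding splitting_proj_def by (metis diff_self)
  qed
  show "splitting_proj T S e \<epsilon> (principal_proj p)" if "inf p (S e) = 0"
  proof -
    have "principal_proj p (S e) = 0"
      using that assms(6) Se by (simp add: principal_proj_eq_0 disj_of_nonneg)
    then show ?thesis
      using \<sigma> fragment_zero[of e] zero bounds unfolding splitting_proj_def by (metis diff_zero)
  qed
qed

lemma splitting_principal_proj_in_band:
  fixes T S :: "'a::{ordered_real_vector, lattice} \<Rightarrow> 'b::{ordered_real_vector, conditionally_complete_lattice}"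
  assumes T: "orth_additive T" "positive_op T" and S: "orth_additive S" "positive_op S" and "\<epsilon> > 0"
    and lower: "\<And>u. (\<And>w. w \<in> fragment_sums T S e \<Longrightarrow> u \<le> w) \<Longrightarrow> u \<le> 0"
    and B: "band B" "p \<in> B" "0 \<le> p" "p \<noteq> 0"
  shows "\<exists>v\<in>B. 0 \<le> v \<and> v \<noteq> 0 \<and> splitting_proj T S e \<epsilon> (principal_proj v)"
proof -
  note disj_case = splitting_principal_proj_if_disj[OF T S less_imp_le[OF \<open>\<epsilon> > 0\<close>]]
  have Te: "0 \<le> T e" and Se: "0 \<le> S e" using T(2) S(2) by (simp_all add: positive_op_def)
  let ?p1 = "inf p (T e)"
  let ?p2 = "inf ?p1 (S e)"
  consider "?p1 = 0" | "?p1 \<noteq> 0" "?p2 = 0" | "?p2 \<noteq> 0" by fastforce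
  then show ?thesis
  proof cases
    case 1
    with B disj_case(1)[OF B(3)] show ?thesis by blast
  next
    case 2
    moreover have "?p1 \<in> B" "0 \<le> ?p1" using B Te by (auto intro: band_nonneg_below)
    ultimately show ?thesis using disj_case(2)[of ?p1] by blast
  next
    case 3
    let ?u = "\<epsilon> *\<^sub>R ?p2"
    have p2: "?p2 \<in> B" "0 \<le> ?p2" "?p2 \<le> T e" "?p2 \<le> S e"
      using band_nonneg_below[OF B(1,2), of ?p2] B(3) Te Se by (auto intro: le_infI1)
    have u: "?u \<in> B" "0 \<le> ?u" "?u \<noteq> 0" "?u \<le> \<epsilon> *\<^sub>R T e" "?u \<le> \<epsilon> *\<^sub>R S e"
      using p2 3 \<open>\<epsilon> > 0\<close> band_scaleR[OF B(1) p2(1)]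
      by (simp_all add: scaleR_nonneg_nonneg scaleR_left_mono)
    then obtain g where g: "fragment g e" "\<not> ?u \<le> T g + S (e - g)"
      using lower[of ?u] by (force simp: fragment_sums_def)
    define v where "v = pos_part (?u - (T g + S (e - g)))"
    have "v \<noteq> 0" "0 \<le> v" using g(2) by (simp_all add: v_def pos_part_eq_0_iff pos_part_nonneg)
    moreover have "0 \<le> T g + S (e - g)"
      using T(2) S(2) by (simp add: positive_op_def add_nonneg_nonneg)
    then have "?u - (T g + S (e - g)) \<le> ?u" using diff_left_mono[of 0 _ ?u] by (simp only: diff_zero)
    then have "v \<le> ?u"
      unfolding v_def using pos_part_mono pos_part_of_nonneg[OF u(2)] by metis
    then have "v \<in> B" using band_nonneg_below[OF B(1) u(1)] \<open>0 \<le> v\<close> by simp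
    ultimately show ?thesis
      using splitting_principal_proj_of_excess[OF T(2) S(2) g(1) u(2,4,5)] unfolding v_def by blast
  qed
qed

definition mutually_disjoint :: "('b::zero \<Rightarrow> 'b) set \<Rightarrow> bool" where
  "mutually_disjoint M \<longleftrightarrow> (\<forall>\<alpha>\<in>M. \<forall>\<beta>\<in>M. \<alpha> \<noteq> \<beta> \<longrightarrow> (\<forall>x. \<alpha> (\<beta> x) = 0))"

lemma mutually_disjoint_insert:
  assumes "mutually_disjoint M" "\<And>\<mu> x. \<mu> \<in> M \<Longrightarrow> \<mu> (\<sigma> x) = 0 \<and> \<sigma> (\<mu> x) = 0"
  shows "mutually_disjoint (insert \<sigma> M)"
  using assms unfolding mutually_disjoint_def by blast

lemma maximal_mutually_disjoint_exists:
  obtains M where "M \<subseteq> Collect P" "mutually_disjoint M"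
    "\<And>N. N \<subseteq> Collect P \<Longrightarrow> mutually_disjoint N \<Longrightarrow> M \<subseteq> N \<Longrightarrow> N = M"
proof -
  let ?F = "{M. M \<subseteq> Collect P \<and> mutually_disjoint M}"
  have "\<exists>M\<in>?F. \<forall>N\<in>?F. M \<subseteq> N \<longrightarrow> N = M"
  proof (rule Zorn_Lemma, intro ballI)
    fix C assume "C \<in> chains ?F"
    then have sub: "C \<subseteq> ?F" and ch: "\<forall>M\<in>C. \<forall>N\<in>C. M \<subseteq> N \<or> N \<subseteq> M"
      by (auto simp: chains_def chain_subset_def)
    have "\<alpha> (\<beta> x) = 0" if "\<alpha> \<in> \<Union>C" "\<beta> \<in> \<Union>C" "\<alpha> \<noteq> \<beta>" for \<alpha> \<beta> x
    proof -
      from that(1,2) obtain M N where "M \<in> C" "\<alpha> \<in> M" "N \<in> C" "\<beta> \<in> N" by blast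
      with ch obtain D where "D \<in> C" "\<alpha> \<in> D" "\<beta> \<in> D" by blast
      with sub that(3) show ?thesis by (auto simp: mutually_disjoint_def)
    qed
    with sub show "\<Union>C \<in> ?F" by (auto simp: mutually_disjoint_def)
  qed
  then obtain M where "M \<in> ?F" "\<forall>N\<in>?F. M \<subseteq> N \<longrightarrow> N = M" by blast
  then show thesis by (intro that[of M]) auto
qed

lemma partition_of_unity_if_maximal:
  fixes T S :: "'a::{ordered_real_vector, lattice} \<Rightarrow> 'b::{ordered_real_vector, conditionally_complete_lattice}"
  assumes T: "orth_additive T" "positive_op T" and S: "orth_additive S" "positive_op S" and "\<epsilon> > 0"
    and lower: "\<And>u. (\<And>w. w \<in> fragment_sums T S e \<Longrightarrow> u \<le> w) \<Longrightarrow> u \<le> 0"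
    and M: "M \<subseteq> Collect (splitting_proj T S e \<epsilon>)" "mutually_disjoint M"
    and maximal: "\<And>N. N \<subseteq> Collect (splitting_proj T S e \<epsilon>) \<Longrightarrow> mutually_disjoint N \<Longrightarrow> M \<subseteq> N \<Longrightarrow> N = M"
  shows "partition_of_unity M (\<lambda>\<sigma>. \<sigma>)"
  unfolding partition_of_unity_def
proof (intro conjI ballI allI impI)
  show "band_proj \<sigma>" if "\<sigma> \<in> M" for \<sigma> using M(1) that by (auto simp: splitting_proj_def)
  show "\<alpha> (\<beta> x) = 0" if "\<alpha> \<in> M" "\<beta> \<in> M" "\<alpha> \<noteq> \<beta>" for \<alpha> \<beta> x
    using M(2) that by (simp add: mutually_disjoint_def)
  fix \<pi> :: "'b \<Rightarrow> 'b" assume "band_proj \<pi> \<and> (\<forall>\<sigma>\<in>M. proj_le \<sigma> \<pi>)"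
  then have \<pi>: "band_proj \<pi>" and le: "\<And>\<sigma>. \<sigma> \<in> M \<Longrightarrow> proj_le \<sigma> \<pi>" by blast+
  show "\<pi> = id"
  proof (rule ccontr)
    assume "\<pi> \<noteq> id"
    then obtain z where "\<pi> z \<noteq> z" by (metis eq_id_iff)
    let ?C = "disj_compl (range \<pi>)"
    have "z - \<pi> z \<in> ?C" using band_proj_ontoD(3)[OF band_proj_onto_range[OF \<pi>]] .
    then have "vabs (z - \<pi> z) \<in> ?C"
      by (rule band_solid[OF band_disj_compl]) (simp add: vabs_of_nonneg vabs_nonneg)
    moreover have "vabs (z - \<pi> z) \<noteq> 0" using \<open>\<pi> z \<noteq> z\<close> by (simp add: vabs_eq_0_iff)
    ultimately obtain v where v: "v \<in> ?C" "0 \<le> v" "v \<noteq> 0"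
      and split: "splitting_proj T S e \<epsilon> (principal_proj v)"
      using splitting_principal_proj_in_band[OF T S \<open>\<epsilon> > 0\<close> lower band_disj_compl] vabs_nonneg by blast
    let ?\<sigma> = "principal_proj v"
    have "\<mu> (?\<sigma> x) = 0 \<and> ?\<sigma> (\<mu> x) = 0" if "\<mu> \<in> M" for \<mu> x
      using principal_proj_disjoint_if_le[OF _ \<pi> le[OF that] v(2,1)] M(1) that
      by (auto simp: splitting_proj_def)
    then have "mutually_disjoint (insert ?\<sigma> M)" by (rule mutually_disjoint_insert[OF M(2)])
    then have "?\<sigma> \<in> M" using maximal[of "insert ?\<sigma> M"] M(1) split by blast
    then have "?\<sigma> v \<le> \<pi> v" using le v(2) by (simp add: proj_le_def)
    also have "\<pi> v = 0" by (rule band_proj_onto_eq_0[OF band_proj_onto_range[OF \<pi>] v(1)])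
    finally show False using principal_proj_self[OF v(2)] v(2,3) by simp
  qed
qed

lemma exists_partition_if_inf_zero:
  fixes T S :: "'a::{ordered_real_vector, lattice} \<Rightarrow> 'b::{ordered_real_vector, conditionally_complete_lattice}"
  assumes T: "uryson T" "positive_op T" and S: "orth_additive S" "positive_op S"
    and inf: "is_inf_U T S (\<lambda>_. 0)" and "\<epsilon> > 0"
  shows "\<exists>(A :: ('b \<Rightarrow> 'b) set) \<rho> ea. partition_of_unity A \<rho> \<and> (\<forall>\<alpha>\<in>A. fragment (ea \<alpha>) e) \<and>
    (\<forall>\<alpha>\<in>A. \<rho> \<alpha> (T (ea \<alpha>)) \<le> \<epsilon> *\<^sub>R T e \<and> \<rho> \<alpha> (S (e - ea \<alpha>)) \<le> \<epsilon> *\<^sub>R S e)"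
proof -
  obtain M where M: "M \<subseteq> Collect (splitting_proj T S e \<epsilon>)" "mutually_disjoint M"
    and maximal: "\<And>N. N \<subseteq> Collect (splitting_proj T S e \<epsilon>) \<Longrightarrow> mutually_disjoint N \<Longrightarrow> M \<subseteq> N \<Longrightarrow> N = M"
    using maximal_mutually_disjoint_exists[of "splitting_proj T S e \<epsilon>"] by metis
  have "orth_additive T" using T(1) by (simp add: uryson_def)
  moreover have "\<And>u. (\<And>w. w \<in> fragment_sums T S e \<Longrightarrow> u \<le> w) \<Longrightarrow> u \<le> 0"
    by (rule nonpos_if_below_fragment_sums[OF T S inf])
  ultimately have "partition_of_unity M (\<lambda>\<sigma>. \<sigma>)"
    by (rule partition_of_unity_if_maximal[OF _ T(2) S \<open>\<epsilon> > 0\<close> _ M maximal])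
  moreover have "\<exists>ea. \<forall>\<sigma>\<in>M. fragment (ea \<sigma>) e \<and>
      \<sigma> (T (ea \<sigma>)) \<le> \<epsilon> *\<^sub>R T e \<and> \<sigma> (S (e - ea \<sigma>)) \<le> \<epsilon> *\<^sub>R S e"
    using M(1) by (intro bchoice) (auto simp: splitting_proj_def)
  ultimately show ?thesis by (intro exI[of _ M] exI[of _ "\<lambda>\<sigma>. \<sigma>"]) (simp add: ball_conj_distrib)
qed

theorem mainTheorem1:
  fixes T S :: "'a::{ordered_real_vector, lattice} \<Rightarrow> 'b::{ordered_real_vector, conditionally_complete_lattice}"
  assumes "uryson T" and "positive_op T"
    and "uryson S" and "positive_op S"
  shows "is_inf_U T S (\<lambda>_. 0) \<longleftrightarrow>
    (\<forall>e. \<forall>\<epsilon>::real. \<epsilon> > 0 \<longrightarrow>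
       (\<exists>(A :: ('b \<Rightarrow> 'b) set) \<rho> ea.
          partition_of_unity A \<rho> \<and>
          (\<forall>\<alpha>\<in>A. fragment (ea \<alpha>) e) \<and>
          (\<forall>\<alpha>\<in>A. \<rho> \<alpha> (T (ea \<alpha>)) \<le> \<epsilon> *\<^sub>R T e \<and>
                   \<rho> \<alpha> (S (e - ea \<alpha>)) \<le> \<epsilon> *\<^sub>R S e)))"
    (is "?inf \<longleftrightarrow> ?partitions")
proof
  assume ?inf
  moreover have "orth_additive S" using assms(3) by (simp add: uryson_def)
  ultimately show ?partitions using exists_partition_if_inf_zero[OF assms(1,2) _ assms(4)] by blast
next
  assume ?partitions
  then show ?inf by (intro is_inf_U_zero_if_partitions[OF assms(2,4)]) blast
qed

end
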